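(* Let $n,m$ be even integers with $2\le m\le n$ (for the second formula) and $n\ge0$ (for the first), let $h_l$ be the orthonormal Hermite polynomials for the weight $e^{-x^2}$ on $\mathbb{R}$, and let $\lambda_{\frac n2+1}$ and $\lambda^{m/2}_{\frac{n-m}2+1}$ be the smallest zeros of $p^{(-1/2)}_{\frac n2+1}(x)$ and $p^{(-1/2)}_{\frac{n-m}2+1}(x,\frac m2)$. For constants $\kappa_1,\kappa_2\in\mathbb{C}$ let $\mathcal{H}_n(x)=\kappa_1\sum_{l=0}^{n/2}p^{(-1/2)}_l(\lambda_{\frac n2+1})h_{2l}(x)$ and $\mathcal{H}^m_n(x)=\kappa_2\sum_{l=m/2}^{n/2}p^{(-1/2)}_{l-\frac m2}(\lambda^{m/2}_{\frac{n-m}2+1},\frac m2)h_{2l}(x)$. Then for $x^2$ different from the respective zero, $\mathcal{H}_n(x)=\kappa_1b_{\frac n2+1}\,p^{(-1/2)}_{n/2}(\lambda_{\frac n2+1})\dfrac{h_{n+2}(x)}{x^2-\lambda_{\frac n2+1}}$, $\mathcal{H}^m_n(x)=\kappa_2\dfrac{b_{\frac n2+1}\,p^{(-1/2)}_{\frac{n-m}2}(\lambda^{m/2}_{\frac{n-m}2+1},\frac m2)\,h_{n+2}(x)+b_{m/2}\,h_{m-2}(x)}{x^2-\lambda^{m/2}_{\frac{n-m}2+1}}$, where $b_k=\sqrt{k(k-\frac12)}$ are the Laguerre recurrence coefficients for $\alpha=-\frac12$.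
   Context: $p^{(\alpha)}_l$ are the orthonormal Laguerre polynomials in $L^2([0,\infty),x^\alpha e^{-x})$ with positive leading coefficients; they satisfy $b_{l+1}p^{(\alpha)}_{l+1}(x)=(x-a_l)p^{(\alpha)}_l(x)-b_lp^{(\alpha)}_{l-1}(x)$ with $a_l=2l+\alpha+1$, $b_l=\sqrt{l(l+\alpha)}$ ($l\ge1$). Associated Laguerre polynomials: $p^{(\alpha)}_{-1}(x,M)=0$, $p^{(\alpha)}_0(x,M)=1$, $b_{M+l+1}p^{(\alpha)}_{l+1}(x,M)=(x-a_{M+l})p^{(\alpha)}_l(x,M)-b_{M+l}p^{(\alpha)}_{l-1}(x,M)$. One has $h_{2l}(x)=p^{(-1/2)}_l(x^2)$. With $\kappa_1,\kappa_2$ normalizing, $\mathcal{H}_n$, $\mathcal{H}^m_n$ are the minimizers of $\int x^2|P|^2e^{-x^2}dx$ over normalized polynomials in $\operatorname{span}\{h_0,\dots,h_n\}$, resp. $\operatorname{span}\{h_m,\dots,h_n\}$. *)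

theory Defs
  imports "HOL-Analysis.Analysis"
begin

definition lag_a :: "real \<Rightarrow> nat \<Rightarrow> real" where
  "lag_a \<alpha> l = 2 * real l + \<alpha> + 1"

definition lag_b :: "real \<Rightarrow> nat \<Rightarrow> real" where
  "lag_b \<alpha> l = sqrt (real l * (real l + \<alpha>))"

text \<open>Orthonormal Laguerre polynomials p_l^(alpha) in L^2([0,inf), x^alpha e^-x),
  positive leading coefficient; p_0 = 1/sqrt(Gamma(alpha+1)), p_{-1} = 0.\<close>
fun lag_p :: "real \<Rightarrow> nat \<Rightarrow> real \<Rightarrow> real" where
  "lag_p \<alpha> 0 x = 1 / sqrt (Gamma (\<alpha> + 1))"
| "lag_p \<alpha> (Suc 0) x = (x - lag_a \<alpha> 0) * lag_p \<alpha> 0 x / lag_b \<alpha> 1"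
| "lag_p \<alpha> (Suc (Suc l)) x =
     ((x - lag_a \<alpha> (Suc l)) * lag_p \<alpha> (Suc l) x - lag_b \<alpha> (Suc l) * lag_p \<alpha> l x)
       / lag_b \<alpha> (Suc (Suc l))"

fun lag_assoc :: "real \<Rightarrow> nat \<Rightarrow> nat \<Rightarrow> real \<Rightarrow> real" where
  "lag_assoc \<alpha> M 0 x = 1"
| "lag_assoc \<alpha> M (Suc 0) x = (x - lag_a \<alpha> M) / lag_b \<alpha> (M + 1)"
| "lag_assoc \<alpha> M (Suc (Suc l)) x =
     ((x - lag_a \<alpha> (M + Suc l)) * lag_assoc \<alpha> M (Suc l) x
        - lag_b \<alpha> (M + Suc l) * lag_assoc \<alpha> M l x) / lag_b \<alpha> (M + Suc (Suc l))"

text \<open>Orthonormal Hermite polynomials for the weight exp(-x^2) on the real line,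
  positive leading coefficient: x h_n = sqrt((n+1)/2) h_{n+1} + sqrt(n/2) h_{n-1}.\<close>
fun herm :: "nat \<Rightarrow> real \<Rightarrow> real" where
  "herm 0 x = pi powr (-1/4)"
| "herm (Suc 0) x = sqrt 2 * x * herm 0 x"
| "herm (Suc (Suc n)) x =
     sqrt (2 / real (n + 2)) * x * herm (Suc n) x - sqrt (real (n + 1) / real (n + 2)) * herm n x"

end

theory Submission
  imports Defs
begin

text \<open>Both identities are Christoffel--Darboux formulas. Since h_{2l}(x) = p_l(x^2) for
  alpha = -1/2, the sums are kernels sum_l p_l(lambda) p_l(y) (resp. with associated polynomials
  in lambda) evaluated at y = x^2. Multiplying by y - lambda and using the three-term recurrence
  in both variables makes the sum telescope; the top boundary term is a multiple of the vanishing
  p_{N+1}(lambda), and for the associated polynomials the bottom boundary term b_M p_{M-1}(y)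
  survives.\<close>

lemma christoffel_darboux_telescoping:
  fixes u v c d :: "nat \<Rightarrow> real"
  assumes u_rec: "\<And>j. c (Suc j) * u (Suc (Suc j)) = (y - d j) * u (Suc j) - c j * u j"
    and v_rec: "\<And>j. c (Suc j) * v (Suc (Suc j)) = (z - d j) * v (Suc j) - c j * v j"
  shows "(y - z) * (\<Sum>j<K. u (Suc j) * v (Suc j))
           = c K * (u (Suc K) * v K - u K * v (Suc K)) - c 0 * (u 1 * v 0 - u 0 * v 1)"
proof (induction K)
  case (Suc K)
  have "c (Suc K) * (u (Suc (Suc K)) * v (Suc K) - u (Suc K) * v (Suc (Suc K)))
      = (c (Suc K) * u (Suc (Suc K))) * v (Suc K) - u (Suc K) * (c (Suc K) * v (Suc (Suc K)))"
    by (simp add: algebra_simps)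
  also have "\<dots> = (y - z) * (u (Suc K) * v (Suc K)) + c K * (u (Suc K) * v K - u K * v (Suc K))"
    unfolding u_rec v_rec by (simp add: algebra_simps)
  finally show ?case using Suc.IH by (simp add: algebra_simps)
qed simp

lemma three_term_recurrence_unique:
  fixes u v c e :: "nat \<Rightarrow> real"
  assumes c_nonzero: "\<And>k. c (Suc k) \<noteq> 0"
    and u_rec: "\<And>k. c (Suc k) * u (Suc k) = e k * u k - c k * u (k - 1)"
    and v_rec: "\<And>k. c (Suc k) * v (Suc k) = e k * v k - c k * v (k - 1)"
    and "u 0 = v 0"
  shows "u k = v k"
proof (induction k rule: less_induct)
  case (less k)
  show ?case
  proof (cases k)
    case (Suc j)
    have "c (Suc j) * u (Suc j) = c (Suc j) * v (Suc j)"
      unfolding u_rec v_rec using less Suc by (simp add: \<open>u 0 = v 0\<close>)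
    then show ?thesis using Suc c_nonzero by simp
  qed (simp add: \<open>u 0 = v 0\<close>)
qed

lemma lag_b_0 [simp]: "lag_b \<alpha> 0 = 0"
  by (simp add: lag_b_def)

lemma lag_b_Suc_pos: "\<alpha> > -1 \<Longrightarrow> lag_b \<alpha> (Suc l) > 0"
  by (simp add: lag_b_def)

text \<open>At k = 0 the truncated index k - 1 is harmless because b_0 = 0.\<close>

lemma lag_p_recurrence:
  assumes "\<alpha> > -1"
  shows "lag_b \<alpha> (Suc k) * lag_p \<alpha> (Suc k) y
           = (y - lag_a \<alpha> k) * lag_p \<alpha> k y - lag_b \<alpha> k * lag_p \<alpha> (k - 1) y"
  using lag_b_Suc_pos[OF assms, of k] by (cases k) auto

lemma christoffel_darboux_lag_p:
  assumes "\<alpha> > -1"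
  shows "(y - z) * (\<Sum>l\<le>N. lag_p \<alpha> l y * lag_p \<alpha> l z)
           = lag_b \<alpha> (Suc N) * (lag_p \<alpha> (Suc N) y * lag_p \<alpha> N z - lag_p \<alpha> N y * lag_p \<alpha> (Suc N) z)"
  using christoffel_darboux_telescoping[where c = "lag_b \<alpha>" and d = "lag_a \<alpha>"
      and u = "\<lambda>i. lag_p \<alpha> (i - 1) y" and v = "\<lambda>i. lag_p \<alpha> (i - 1) z" and K = "Suc N"]
  by (simp add: lag_p_recurrence[OF assms] lessThan_Suc_atMost)

lemma christoffel_darboux_lag_assoc:
  assumes "\<alpha> > -1" and "M \<ge> 1"
  shows "(y - z) * (\<Sum>l\<le>K. lag_p \<alpha> (M + l) y * lag_assoc \<alpha> M l z)
           = lag_b \<alpha> (M + Suc K) * (lag_p \<alpha> (M + Suc K) y * lag_assoc \<alpha> M K z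
                                    - lag_p \<alpha> (M + K) y * lag_assoc \<alpha> M (Suc K) z)
             + lag_b \<alpha> M * lag_p \<alpha> (M - 1) y"
proof -
  define q where "q = case_nat 0 (\<lambda>l. lag_assoc \<alpha> M l z)"
  have q_rec: "lag_b \<alpha> (M + Suc j) * q (Suc (Suc j))
      = (z - lag_a \<alpha> (M + j)) * q (Suc j) - lag_b \<alpha> (M + j) * q j" for j
    using lag_b_Suc_pos[OF assms(1), of "M + j"] unfolding q_def by (cases j) auto
  have p_rec: "lag_b \<alpha> (M + Suc j) * lag_p \<alpha> (M + Suc (Suc j) - 1) y
      = (y - lag_a \<alpha> (M + j)) * lag_p \<alpha> (M + Suc j - 1) y - lag_b \<alpha> (M + j) * lag_p \<alpha> (M + j - 1) y" for j
    using lag_p_recurrence[OF assms(1), of "M + j" y] assms(2) by simp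
  show ?thesis
    using christoffel_darboux_telescoping[where c = "\<lambda>i. lag_b \<alpha> (M + i)" and d = "\<lambda>i. lag_a \<alpha> (M + i)"
        and u = "\<lambda>i. lag_p \<alpha> (M + i - 1) y" and v = q and K = "Suc K", OF p_rec q_rec] assms(2)
    by (simp add: q_def lessThan_Suc_atMost algebra_simps)
qed

lemma herm_three_term:
  "x * herm n x = sqrt ((real n + 1) / 2) * herm (Suc n) x + sqrt (real n / 2) * herm (n - 1) x"
proof (cases n)
  case (Suc k)
  have "sqrt ((real k + 2) / 2) * herm (Suc (Suc k)) x
      = (sqrt ((real k + 2) / 2) * sqrt (2 / real (k + 2))) * x * herm (Suc k) x
        - (sqrt ((real k + 2) / 2) * sqrt (real (k + 1) / real (k + 2))) * herm k x"
    by (simp add: algebra_simps)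
  also have "\<dots> = x * herm (Suc k) x - sqrt ((real k + 1) / 2) * herm k x"
    by (simp add: real_sqrt_mult[symmetric] field_simps)
  finally show ?thesis using Suc by (simp add: add.commute)
qed (simp add: real_sqrt_mult[symmetric])

lemma herm_even_recurrence:
  "lag_b (-1/2) (Suc k) * herm (2 * Suc k) x
     = (x\<^sup>2 - lag_a (-1/2) k) * herm (2 * k) x - lag_b (-1/2) k * herm (2 * (k - 1)) x"
proof -
  let ?s = "\<lambda>j::nat. sqrt (real j / 2)"
  have odd_up: "x * herm (Suc (2 * k)) x = ?s (2 * k + 2) * herm (2 * Suc k) x + ?s (2 * k + 1) * herm (2 * k) x"
    using herm_three_term[of x "Suc (2 * k)"] by (simp add: add_ac)
  have odd_down: "?s (2 * k) * (x * herm (2 * k - 1) x)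
      = ?s (2 * k) * (?s (2 * k) * herm (2 * k) x + ?s (2 * k - 1) * herm (2 * (k - 1)) x)"
    using herm_three_term[of x "2 * k - 1"] by (cases k) (simp_all add: add_ac)
  have b_Suc: "?s (2 * k + 1) * ?s (2 * k + 2) = lag_b (-1/2) (Suc k)"
    by (simp add: lag_b_def real_sqrt_mult[symmetric] field_simps)
  have a: "(?s (2 * k + 1))\<^sup>2 + (?s (2 * k))\<^sup>2 = lag_a (-1/2) k"
    by (simp add: lag_a_def field_simps)
  have b: "?s (2 * k) * ?s (2 * k - 1) = lag_b (-1/2) k"
    by (cases k) (simp_all add: lag_b_def real_sqrt_mult[symmetric] field_simps)
  have "x\<^sup>2 * herm (2 * k) x = ?s (2 * k + 1) * (x * herm (Suc (2 * k)) x) + ?s (2 * k) * (x * herm (2 * k - 1) x)"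
    using herm_three_term[of x "2 * k"] by (simp add: power2_eq_square algebra_simps)
  also have "\<dots> = (?s (2 * k + 1) * ?s (2 * k + 2)) * herm (2 * Suc k) x
      + ((?s (2 * k + 1))\<^sup>2 + (?s (2 * k))\<^sup>2) * herm (2 * k) x + (?s (2 * k) * ?s (2 * k - 1)) * herm (2 * (k - 1)) x"
    unfolding odd_up odd_down by (simp only: power2_eq_square algebra_simps)
  finally show ?thesis unfolding b_Suc a b by (simp add: algebra_simps)
qed

lemma lag_p_minus_half_0: "lag_p (-1/2) 0 y = pi powr (-1/4)"
proof -
  have "sqrt (sqrt pi) = pi powr (1/4)"
    by (simp add: powr_half_sqrt[symmetric] powr_powr)
  then show ?thesis by (simp add: Gamma_one_half_real powr_minus_divide)
qed

lemma herm_even_eq_lag_p: "herm (2 * l) x = lag_p (-1/2) l (x\<^sup>2)"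
proof (rule three_term_recurrence_unique[where c = "lag_b (-1/2)" and e = "\<lambda>k. x\<^sup>2 - lag_a (-1/2) k"
      and u = "\<lambda>k. herm (2 * k) x" and v = "\<lambda>k. lag_p (-1/2) k (x\<^sup>2)"])
  show "lag_b (-1/2) (Suc k) \<noteq> 0" for k
    using lag_b_Suc_pos[of "-1/2" k] by simp
  show "lag_b (-1/2) (Suc k) * lag_p (-1/2) (Suc k) (x\<^sup>2)
      = (x\<^sup>2 - lag_a (-1/2) k) * lag_p (-1/2) k (x\<^sup>2) - lag_b (-1/2) k * lag_p (-1/2) (k - 1) (x\<^sup>2)" for k
    by (rule lag_p_recurrence) simp
  show "herm (2 * 0) x = lag_p (-1/2) 0 (x\<^sup>2)"
    by (simp only: lag_p_minus_half_0) simp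
qed (rule herm_even_recurrence)

lemma herm_kernel_closed_form:
  assumes "lag_p (-1/2) (Suc N) lam = 0" and "x\<^sup>2 \<noteq> lam"
  shows "(\<Sum>l = 0..N. lag_p (-1/2) l lam * herm (2 * l) x)
           = lag_b (-1/2) (Suc N) * lag_p (-1/2) N lam * herm (2 * Suc N) x / (x\<^sup>2 - lam)"
proof -
  have "(x\<^sup>2 - lam) * (\<Sum>l\<le>N. lag_p (-1/2) l (x\<^sup>2) * lag_p (-1/2) l lam)
      = lag_b (-1/2) (Suc N) * lag_p (-1/2) N lam * lag_p (-1/2) (Suc N) (x\<^sup>2)"
    using christoffel_darboux_lag_p[where \<alpha> = "-1/2" and y = "x\<^sup>2" and z = lam and N = N] assms(1)
    by simp
  then show ?thesis
    using assms(2) unfolding herm_even_eq_lag_p by (simp add: atLeast0AtMost field_simps)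
qed

lemma herm_assoc_kernel_closed_form:
  assumes "1 \<le> M" "M \<le> N" and "lag_assoc (-1/2) M (N - M + 1) lam = 0" and "x\<^sup>2 \<noteq> lam"
  shows "(\<Sum>l = M..N. lag_assoc (-1/2) M (l - M) lam * herm (2 * l) x)
           = (lag_b (-1/2) (Suc N) * lag_assoc (-1/2) M (N - M) lam * herm (2 * Suc N) x
              + lag_b (-1/2) M * herm (2 * (M - 1)) x) / (x\<^sup>2 - lam)"
proof -
  have "(\<Sum>l = M..N. lag_assoc (-1/2) M (l - M) lam * herm (2 * l) x)
      = (\<Sum>l = 0 + M..(N - M) + M. lag_p (-1/2) l (x\<^sup>2) * lag_assoc (-1/2) M (l - M) lam)"
    using assms(2) unfolding herm_even_eq_lag_p by (simp add: mult.commute)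
  also have "\<dots> = (\<Sum>j\<le>N - M. lag_p (-1/2) (M + j) (x\<^sup>2) * lag_assoc (-1/2) M j lam)"
    by (simp only: sum.shift_bounds_cl_nat_ivl atLeast0AtMost) (simp add: add.commute)
  finally have sum_eq: "(\<Sum>l = M..N. lag_assoc (-1/2) M (l - M) lam * herm (2 * l) x)
      = (\<Sum>j\<le>N - M. lag_p (-1/2) (M + j) (x\<^sup>2) * lag_assoc (-1/2) M j lam)" .
  have "(x\<^sup>2 - lam) * (\<Sum>j\<le>N - M. lag_p (-1/2) (M + j) (x\<^sup>2) * lag_assoc (-1/2) M j lam)
      = lag_b (-1/2) (Suc N) * lag_assoc (-1/2) M (N - M) lam * lag_p (-1/2) (Suc N) (x\<^sup>2)
        + lag_b (-1/2) M * lag_p (-1/2) (M - 1) (x\<^sup>2)"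
    using christoffel_darboux_lag_assoc[where \<alpha> = "-1/2" and M = M and y = "x\<^sup>2" and z = lam and K = "N - M"]
      assms(1-3) by (simp add: algebra_simps)
  then show ?thesis
    using assms(4) unfolding sum_eq unfolding herm_even_eq_lag_p by (simp add: field_simps)
qed

theorem corollary5p3:
  fixes n m :: nat and k1 k2 :: complex and lam1 lam2 :: real
  assumes "even n" and "even m"
    and "lag_p (-1/2) (n div 2 + 1) lam1 = 0"
    and "\<forall>y. lag_p (-1/2) (n div 2 + 1) y = 0 \<longrightarrow> lam1 \<le> y"
  shows "(\<forall>x::real. x\<^sup>2 \<noteq> lam1 \<longrightarrow>
            k1 * (\<Sum>l = 0..n div 2. complex_of_real (lag_p (-1/2) l lam1 * herm (2 * l) x))
            = k1 * complex_of_real (lag_b (-1/2) (n div 2 + 1) * lag_p (-1/2) (n div 2) lam1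
                 * herm (n + 2) x / (x\<^sup>2 - lam1)))
       \<and> ((2 \<le> m \<and> m \<le> n \<and>
            lag_assoc (-1/2) (m div 2) ((n - m) div 2 + 1) lam2 = 0 \<and>
            (\<forall>y. lag_assoc (-1/2) (m div 2) ((n - m) div 2 + 1) y = 0 \<longrightarrow> lam2 \<le> y)) \<longrightarrow>
           (\<forall>x::real. x\<^sup>2 \<noteq> lam2 \<longrightarrow>
            k2 * (\<Sum>l = m div 2..n div 2.
                 complex_of_real (lag_assoc (-1/2) (m div 2) (l - m div 2) lam2 * herm (2 * l) x))
            = k2 * complex_of_real
                 ((lag_b (-1/2) (n div 2 + 1) * lag_assoc (-1/2) (m div 2) ((n - m) div 2) lam2
                     * herm (n + 2) x + lag_b (-1/2) (m div 2) * herm (m - 2) x)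
                  / (x\<^sup>2 - lam2))))"
proof -
  define N M where "N = n div 2" and "M = m div 2"
  have n_eq: "n = 2 * N" and m_eq: "m = 2 * M"
    using assms(1,2) unfolding N_def M_def by simp_all
  have zero: "lag_p (-1/2) (Suc N) lam1 = 0"
    using assms(3) by (simp add: N_def)
  have "herm (n + 2) x = herm (2 * Suc N) x" and "herm (m - 2) x = herm (2 * (M - 1)) x" for x
    unfolding n_eq m_eq by (simp_all add: right_diff_distrib')
  moreover have "(n - m) div 2 = N - M"
    unfolding n_eq m_eq by simp
  ultimately show ?thesis
    using herm_kernel_closed_form[OF zero] herm_assoc_kernel_closed_form[of M N lam2]
    unfolding of_real_sum[symmetric] N_def[symmetric] M_def[symmetric]
    by (auto simp: m_eq n_eq)
qed

end
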